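(* Let the $\mathbb{C}^*$-action on $\mathbb{P}^n$ be given by $\lambda\cdot[z_0:\dots:z_n]=[\lambda^{a_0}z_0:\dots:\lambda^{a_n}z_n]$ with integers $a_0\leq a_1\leq\dots\leq a_n$, not all equal. Let $X\subset\mathbb{P}^n$ be a smooth connected projective variety invariant under this action (with the induced action), and suppose $X^{\mathbb{C}^*}$ is finite. Let $F_1,\dots,F_r$ be the connected components of $(\mathbb{P}^n)^{\mathbb{C}^*}$, where $F_1$ is the component linearly spanned by the coordinate points $p_0,\dots,p_k$ (so $a_0=\dots=a_k<a_{k+1}$ and $\dim F_1=k$). Then $\#(X\cap F_1)\leq \dim F_1+1$.
   Context: $p_i\in\mathbb{P}^n$ denotes the coordinate point with $1$ in position $i$ and $0$ elsewhere. $(\mathbb{P}^n)^{\mathbb{C}^*}$ and $X^{\mathbb{C}^*}$ denote the sets of points fixed by every $\lambda\in\mathbb{C}^*$; the connected components of $(\mathbb{P}^n)^{\mathbb{C}^*}$ are the linear subspaces spanned by coordinate points with equal weight $a_i$. *)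

theory Defs
  imports Complex_Main
begin

text \<open>Projective space P^n is modelled through affine cones: a point of C^(n+1) is a function
  z :: nat => complex with z i = 0 for i > n; a subset of P^n is represented by the set of
  nonzero vectors lying over it.  Polynomials in z_0..z_n are finitely supported coefficient
  functions on exponent vectors (nat => nat), with exponents vanishing beyond n.\<close>

type_synonym cvec = "nat \<Rightarrow> complex"
type_synonym cpoly = "(nat \<Rightarrow> nat) \<Rightarrow> complex"

definition in_coords :: "nat \<Rightarrow> cvec \<Rightarrow> bool" where
  "in_coords n z \<longleftrightarrow> (\<forall>i>n. z i = 0)"

definition is_poly :: "nat \<Rightarrow> cpoly \<Rightarrow> bool" where
  "is_poly n p \<longleftrightarrow> finite {m. p m \<noteq> 0} \<and> (\<forall>m. p m \<noteq> 0 \<longrightarrow> (\<forall>i>n. m i = 0))"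

definition peval :: "nat \<Rightarrow> cpoly \<Rightarrow> cvec \<Rightarrow> complex" where
  "peval n p z = (\<Sum>m\<in>{m. p m \<noteq> 0}. p m * (\<Prod>i\<le>n. z i ^ m i))"

definition homog :: "nat \<Rightarrow> nat \<Rightarrow> cpoly \<Rightarrow> bool" where
  "homog n d p \<longleftrightarrow> (\<forall>m. p m \<noteq> 0 \<longrightarrow> (\<Sum>i\<le>n. m i) = d)"

definition pderiv_var :: "nat \<Rightarrow> cpoly \<Rightarrow> cpoly" where
  "pderiv_var j p = (\<lambda>m. of_nat (Suc (m j)) * p (m(j := Suc (m j))))"

definition Vproj :: "nat \<Rightarrow> cpoly set \<Rightarrow> cvec set" where
  "Vproj n S = {z. in_coords n z \<and> (\<exists>i. z i \<noteq> 0) \<and> (\<forall>p\<in>S. peval n p z = 0)}"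

definition proj_alg :: "nat \<Rightarrow> cvec set \<Rightarrow> bool" where
  "proj_alg n X \<longleftrightarrow> (\<exists>S. (\<forall>p\<in>S. is_poly n p \<and> (\<exists>d. homog n d p)) \<and> X = Vproj n S)"

definition proj_irreducible :: "nat \<Rightarrow> cvec set \<Rightarrow> bool" where
  "proj_irreducible n X \<longleftrightarrow> proj_alg n X \<and> X \<noteq> {} \<and>
     (\<forall>Y Z. proj_alg n Y \<and> proj_alg n Z \<and> X = Y \<union> Z \<longrightarrow> X = Y \<or> X = Z)"

definition proj_connected :: "nat \<Rightarrow> cvec set \<Rightarrow> bool" where
  "proj_connected n X \<longleftrightarrow> proj_alg n X \<and> X \<noteq> {} \<and>
     (\<forall>Y Z. proj_alg n Y \<and> proj_alg n Z \<and> X = Y \<union> Z \<and> Y \<inter> Z = {} \<longrightarrow> Y = {} \<or> Z = {})"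

definition proj_dim :: "nat \<Rightarrow> cvec set \<Rightarrow> nat" where
  "proj_dim n X = Sup {d. \<exists>ch. (\<forall>i\<le>d. proj_irreducible n (ch i)) \<and>
                               (\<forall>i<d. ch i \<subset> ch (Suc i)) \<and> ch d = X}"

definition vanish_ideal :: "nat \<Rightarrow> cvec set \<Rightarrow> cpoly set" where
  "vanish_ideal n X = {p. is_poly n p \<and> (\<forall>z\<in>X. peval n p z = 0)}"

definition tangent_space :: "nat \<Rightarrow> cvec set \<Rightarrow> cvec \<Rightarrow> cvec set" where
  "tangent_space n X z = {v. in_coords n v \<and>
     (\<forall>p\<in>vanish_ideal n X. (\<Sum>j\<le>n. peval n (pderiv_var j p) z * v j) = 0)}"

definition lin_indep :: "cvec set \<Rightarrow> bool" where
  "lin_indep B \<longleftrightarrow> (\<forall>c. (\<forall>i. (\<Sum>v\<in>B. c v * v i) = 0) \<longrightarrow> (\<forall>v\<in>B. c v = 0))"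

definition cdim :: "cvec set \<Rightarrow> nat" where
  "cdim V = Sup {card B | B. finite B \<and> B \<subseteq> V \<and> lin_indep B}"

text \<open>Smoothness (Jacobian criterion): at every point, the tangent space of the cone has
  dimension dim X + 1.\<close>
definition proj_smooth :: "nat \<Rightarrow> cvec set \<Rightarrow> bool" where
  "proj_smooth n X \<longleftrightarrow> (\<forall>z\<in>X. cdim (tangent_space n X z) = proj_dim n X + 1)"

definition cscale :: "complex \<Rightarrow> cvec \<Rightarrow> cvec" where
  "cscale c z = (\<lambda>i. c * z i)"

definition ppoint :: "cvec \<Rightarrow> cvec set" where
  "ppoint z = {cscale c z | c. c \<noteq> 0}"

definition act :: "(nat \<Rightarrow> int) \<Rightarrow> complex \<Rightarrow> cvec \<Rightarrow> cvec" where
  "act a l z = (\<lambda>i. l powi a i * z i)"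

definition invariant :: "(nat \<Rightarrow> int) \<Rightarrow> cvec set \<Rightarrow> bool" where
  "invariant a X \<longleftrightarrow> (\<forall>z\<in>X. \<forall>l. l \<noteq> 0 \<longrightarrow> act a l z \<in> X)"

definition fixed_pts :: "(nat \<Rightarrow> int) \<Rightarrow> cvec set \<Rightarrow> cvec set" where
  "fixed_pts a X = {z\<in>X. \<forall>l. l \<noteq> 0 \<longrightarrow> ppoint (act a l z) = ppoint z}"

end

theory Submission imports Defs begin

text \<open>Since the weights on F1 are minimal, for a point z of X with a nonzero coordinate among
  z_0..z_k the limit of \<lambda>\<cdot>z as \<lambda> \<rightarrow> 0 is the truncation of z to these coordinates, and it
  lies in X because X is closed and invariant.  So truncation maps the open set of such points of
  X into the finite set X \<inter> F1.  The fibres of this map are closed subsets of X (the points whose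
  first k+1 coordinates are proportional to a given vector), so by irreducibility one fibre is all
  of X, and X \<inter> F1 is a single point or empty.\<close>

subsection \<open>Products of polynomials and unions of algebraic sets\<close>

definition monom_val :: "nat \<Rightarrow> (nat \<Rightarrow> nat) \<Rightarrow> cvec \<Rightarrow> complex" where
  "monom_val n m z = (\<Prod>i\<le>n. z i ^ m i)"

lemma peval_superset:
  assumes "finite T" "{m. p m \<noteq> 0} \<subseteq> T"
  shows "peval n p z = (\<Sum>m\<in>T. p m * monom_val n m z)"
  unfolding peval_def monom_val_def
  by (rule sum.mono_neutral_left) (use assms in auto)

definition exp_add :: "(nat \<Rightarrow> nat) \<times> (nat \<Rightarrow> nat) \<Rightarrow> nat \<Rightarrow> nat" where
  "exp_add x = (\<lambda>i. fst x i + snd x i)"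

definition pmul :: "cpoly \<Rightarrow> cpoly \<Rightarrow> cpoly" where
  "pmul p q = (\<lambda>m. \<Sum>x\<in>{x\<in>{m. p m \<noteq> 0} \<times> {m. q m \<noteq> 0}. exp_add x = m}. p (fst x) * q (snd x))"

lemma monom_val_exp_add: "monom_val n (exp_add x) z = monom_val n (fst x) z * monom_val n (snd x) z"
  unfolding monom_val_def exp_add_def by (simp add: power_add prod.distrib)

lemma pmul_support: "{m. pmul p q m \<noteq> 0} \<subseteq> exp_add ` ({m. p m \<noteq> 0} \<times> {m. q m \<noteq> 0})"
proof
  fix m assume "m \<in> {m. pmul p q m \<noteq> 0}"
  then have "{x\<in>{m. p m \<noteq> 0} \<times> {m. q m \<noteq> 0}. exp_add x = m} \<noteq> {}"
    unfolding pmul_def mem_Collect_eq by (rule contrapos_nn) (simp only: sum.empty)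
  then show "m \<in> exp_add ` ({m. p m \<noteq> 0} \<times> {m. q m \<noteq> 0})" by blast
qed

lemma peval_pmul:
  assumes "is_poly n p" "is_poly n q"
  shows "peval n (pmul p q) z = peval n p z * peval n q z"
proof -
  let ?P = "{m. p m \<noteq> 0}" and ?Q = "{m. q m \<noteq> 0}"
  have fin: "finite ?P" "finite ?Q" using assms unfolding is_poly_def by auto
  let ?T = "exp_add ` (?P \<times> ?Q)"
  have "peval n (pmul p q) z = (\<Sum>m\<in>?T. pmul p q m * monom_val n m z)"
    by (rule peval_superset[OF _ pmul_support]) (use fin in auto)
  also have "\<dots> = (\<Sum>m\<in>?T. \<Sum>x\<in>{x. x \<in> ?P \<times> ?Q \<and> exp_add x = m}.
                    p (fst x) * q (snd x) * monom_val n (exp_add x) z)"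
    unfolding pmul_def sum_distrib_right by (intro sum.cong refl) auto
  also have "\<dots> = (\<Sum>x\<in>?P \<times> ?Q. p (fst x) * q (snd x) * monom_val n (exp_add x) z)"
    by (rule sum.group) (use fin in auto)
  also have "\<dots> = (\<Sum>x\<in>?P \<times> ?Q. (p (fst x) * monom_val n (fst x) z) * (q (snd x) * monom_val n (snd x) z))"
    by (simp add: monom_val_exp_add mult_ac)
  also have "\<dots> = (\<Sum>m\<in>?P. p m * monom_val n m z) * (\<Sum>m\<in>?Q. q m * monom_val n m z)"
    unfolding sum_product sum.cartesian_product by (rule sum.cong) auto
  also have "\<dots> = peval n p z * peval n q z"
    using peval_superset[OF fin(1), of p n z] peval_superset[OF fin(2), of q n z] by simp
  finally show ?thesis .
qed

lemma is_poly_pmul: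
  assumes "is_poly n p" "is_poly n q"
  shows "is_poly n (pmul p q)"
  unfolding is_poly_def
proof safe
  have "finite {m. p m \<noteq> 0}" "finite {m. q m \<noteq> 0}" using assms unfolding is_poly_def by auto
  then show "finite {m. pmul p q m \<noteq> 0}"
    using pmul_support by (meson finite_SigmaI finite_imageI finite_subset)
next
  fix m i assume "pmul p q m \<noteq> 0" "n < i"
  then obtain x where "x \<in> {m. p m \<noteq> 0} \<times> {m. q m \<noteq> 0}" "m = exp_add x"
    using pmul_support by blast
  then show "m i = 0" using assms \<open>n < i\<close> unfolding is_poly_def exp_add_def by auto
qed

lemma homog_pmul:
  assumes "homog n d p" "homog n e q"
  shows "homog n (d + e) (pmul p q)"
  unfolding homog_def
proof safe
  fix m assume "pmul p q m \<noteq> 0"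
  then obtain x where "x \<in> {m. p m \<noteq> 0} \<times> {m. q m \<noteq> 0}" "m = exp_add x"
    using pmul_support by blast
  then show "(\<Sum>i\<le>n. m i) = d + e"
    using assms unfolding homog_def exp_add_def by (auto simp: sum.distrib)
qed

lemma proj_alg_Un:
  assumes "proj_alg n Y" "proj_alg n Z"
  shows "proj_alg n (Y \<union> Z)"
proof -
  obtain S where S: "\<forall>p\<in>S. is_poly n p \<and> (\<exists>d. homog n d p)" "Y = Vproj n S"
    using assms(1) unfolding proj_alg_def by blast
  obtain T where T: "\<forall>q\<in>T. is_poly n q \<and> (\<exists>d. homog n d q)" "Z = Vproj n T"
    using assms(2) unfolding proj_alg_def by blast
  let ?ST = "{pmul p q | p q. p \<in> S \<and> q \<in> T}"
  have "\<forall>r\<in>?ST. is_poly n r \<and> (\<exists>d. homog n d r)"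
    using S(1) T(1) is_poly_pmul homog_pmul by blast
  moreover have "Y \<union> Z = Vproj n ?ST"
  proof
    show "Y \<union> Z \<subseteq> Vproj n ?ST"
      using S T by (auto simp: Vproj_def peval_pmul)
    show "Vproj n ?ST \<subseteq> Y \<union> Z"
    proof
      fix z assume z: "z \<in> Vproj n ?ST"
      show "z \<in> Y \<union> Z"
      proof (cases "z \<in> Y")
        case False
        then obtain p where p: "p \<in> S" "peval n p z \<noteq> 0" using z S(2) by (auto simp: Vproj_def)
        have "peval n q z = 0" if "q \<in> T" for q
        proof -
          have "peval n (pmul p q) z = 0" using z p that by (auto simp: Vproj_def)
          then show ?thesis using p S(1) T(1) that by (simp add: peval_pmul)
        qed
        then show ?thesis using z T(2) by (auto simp: Vproj_def)
      qed simp
    qed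
  qed
  ultimately show ?thesis unfolding proj_alg_def by blast
qed

lemma proj_alg_Union:
  assumes "finite \<C>" "\<C> \<noteq> {}" "\<forall>Y\<in>\<C>. proj_alg n Y"
  shows "proj_alg n (\<Union>\<C>)"
  using assms by (induction \<C> rule: finite_ne_induct) (auto intro: proj_alg_Un)

lemma proj_irreducible_finite_cover:
  assumes "proj_irreducible n X" "finite \<C>" "\<forall>Y\<in>\<C>. proj_alg n Y" "X = \<Union>\<C>"
  shows "X \<in> \<C>"
proof -
  have "\<C> \<noteq> {}" using assms(1,4) unfolding proj_irreducible_def by auto
  from assms(2) this assms(3,4) show ?thesis
  proof (induction \<C> rule: finite_ne_induct)
    case (insert Y \<C>)
    have "proj_alg n (\<Union>\<C>)" using insert by (intro proj_alg_Union) auto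
    then have "X = Y \<or> X = \<Union>\<C>"
      using assms(1) insert.prems unfolding proj_irreducible_def by auto
    then show ?case using insert by auto
  qed simp
qed

definition unit_exp :: "nat \<Rightarrow> nat \<Rightarrow> nat" where
  "unit_exp i = (\<lambda>l. if l = i then 1 else 0)"

definition linear_poly :: "nat \<Rightarrow> cvec \<Rightarrow> cpoly" where
  "linear_poly n c = (\<lambda>m. \<Sum>i\<le>n. if m = unit_exp i then c i else 0)"

lemma unit_exp_eq_iff: "unit_exp i = unit_exp j \<longleftrightarrow> i = j"
  unfolding unit_exp_def by (metis one_neq_zero)

lemma linear_poly_unit_exp: "i \<le> n \<Longrightarrow> linear_poly n c (unit_exp i) = c i"
  unfolding linear_poly_def unit_exp_eq_iff by simp

lemma monom_val_unit_exp: "i \<le> n \<Longrightarrow> monom_val n (unit_exp i) z = z i"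
  unfolding monom_val_def unit_exp_def
  by (simp add: prod.delta[simplified] if_distrib cong: if_cong)

lemma linear_poly_support: "{m. linear_poly n c m \<noteq> 0} \<subseteq> unit_exp ` {..n}"
proof
  fix m assume "m \<in> {m. linear_poly n c m \<noteq> 0}"
  then have "(\<Sum>i\<le>n. if m = unit_exp i then c i else 0) \<noteq> 0" unfolding linear_poly_def by simp
  then obtain i where "i \<in> {..n}" "(if m = unit_exp i then c i else 0) \<noteq> 0"
    using sum.not_neutral_contains_not_neutral by blast
  then show "m \<in> unit_exp ` {..n}" by (auto split: if_splits)
qed

lemma peval_linear_poly: "peval n (linear_poly n c) z = (\<Sum>i\<le>n. c i * z i)"
proof -
  have "peval n (linear_poly n c) z = (\<Sum>m\<in>unit_exp ` {..n}. linear_poly n c m * monom_val n m z)"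
    by (rule peval_superset[OF _ linear_poly_support]) simp
  also have "\<dots> = (\<Sum>i\<le>n. linear_poly n c (unit_exp i) * monom_val n (unit_exp i) z)"
    by (rule sum.reindex_cong[where l = unit_exp]) (auto simp: inj_on_def unit_exp_eq_iff)
  also have "\<dots> = (\<Sum>i\<le>n. c i * z i)"
    by (simp add: linear_poly_unit_exp monom_val_unit_exp)
  finally show ?thesis .
qed

lemma is_poly_linear_poly: "is_poly n (linear_poly n c)"
  unfolding is_poly_def
proof safe
  show "finite {m. linear_poly n c m \<noteq> 0}" using linear_poly_support finite_subset by blast
  fix m i assume "linear_poly n c m \<noteq> 0" "n < i"
  then show "m i = 0" using linear_poly_support by (force simp: unit_exp_def)
qed

lemma homog_linear_poly: "homog n 1 (linear_poly n c)"
  unfolding homog_def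
proof safe
  fix m assume "linear_poly n c m \<noteq> 0"
  then obtain j where "j \<le> n" "m = unit_exp j" using linear_poly_support by blast
  then show "(\<Sum>i\<le>n. m i) = 1" by (simp add: unit_exp_def)
qed

lemma proj_alg_Int_linear:
  assumes "proj_alg n X"
  shows "proj_alg n {z\<in>X. \<forall>t\<in>T. (\<Sum>i\<le>n. c t i * z i) = 0}"
proof -
  obtain S where S: "\<forall>p\<in>S. is_poly n p \<and> (\<exists>d. homog n d p)" "X = Vproj n S"
    using assms unfolding proj_alg_def by blast
  let ?S = "S \<union> (\<lambda>t. linear_poly n (c t)) ` T"
  have "\<forall>p\<in>?S. is_poly n p \<and> (\<exists>d. homog n d p)"
    using S(1) is_poly_linear_poly homog_linear_poly by blast
  moreover have "{z\<in>X. \<forall>t\<in>T. (\<Sum>i\<le>n. c t i * z i) = 0} = Vproj n ?S"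
    unfolding S(2) Vproj_def by (auto simp: peval_linear_poly[symmetric])
  ultimately show ?thesis unfolding proj_alg_def by blast
qed

lemma proj_alg_nonzero: "proj_alg n X \<Longrightarrow> z \<in> X \<Longrightarrow> \<exists>i. z i \<noteq> 0"
  unfolding proj_alg_def Vproj_def by blast

lemma sum_coord:
  fixes z :: cvec
  assumes "i \<le> n"
  shows "(\<Sum>l\<le>n. (if l = i then u else 0) * z l) = u * z i"
proof -
  have "(\<Sum>l\<le>n. (if l = i then u else 0) * z l) = (\<Sum>l\<le>n. if l = i then u * z l else 0)"
    by (intro sum.cong) auto
  then show ?thesis using assms by simp
qed

lemma sum_coord_diff:
  fixes z :: cvec
  assumes "i \<le> n" "j \<le> n"
  shows "(\<Sum>l\<le>n. ((if l = i then u else 0) - (if l = j then v else 0)) * z l) = u * z i - v * z j"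
  using assms by (simp add: left_diff_distrib sum_subtractf sum_coord)

lemma proj_alg_proportional:
  assumes "proj_alg n X" "k \<le> n"
  shows "proj_alg n {z\<in>X. \<forall>i\<le>k. \<forall>j\<le>k. z i * w j = z j * w i}"
proof -
  define c where "c t = (\<lambda>l. (if l = fst t then w (snd t) else 0) - (if l = snd t then w (fst t) else 0))"
    for t :: "nat \<times> nat"
  have "(\<Sum>l\<le>n. c (i, j) l * z l) = 0 \<longleftrightarrow> z i * w j = z j * w i" if "i \<le> k" "j \<le> k" for z i j
    using that assms(2) by (simp add: c_def sum_coord_diff) (simp add: mult.commute)
  then have "{z\<in>X. \<forall>t\<in>{..k} \<times> {..k}. (\<Sum>l\<le>n. c t l * z l) = 0}
      = {z\<in>X. \<forall>i\<le>k. \<forall>j\<le>k. z i * w j = z j * w i}"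
    by auto
  then show ?thesis using proj_alg_Int_linear[OF assms(1), of "{..k} \<times> {..k}" c] by simp
qed

lemma proj_alg_coords_zero:
  assumes "proj_alg n X" "k \<le> n"
  shows "proj_alg n {z\<in>X. \<forall>i\<le>k. z i = 0}"
proof -
  have "{z\<in>X. \<forall>i\<in>{..k}. (\<Sum>l\<le>n. (if l = i then 1 else 0) * z l) = 0} = {z\<in>X. \<forall>i\<le>k. z i = 0}"
    using assms(2) by (auto simp: sum_coord)
  then show ?thesis
    using proj_alg_Int_linear[OF assms(1), of "{..k}" "\<lambda>i l. if l = i then 1 else 0"] by simp
qed

lemma ppoint_cscale: "c \<noteq> 0 \<Longrightarrow> ppoint (cscale c z) = ppoint z"
  unfolding ppoint_def cscale_def
proof (auto, goal_cases)
  case (1 d) then show ?case by (rule_tac x = "d * c" in exI) (simp add: mult_ac)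
next
  case (2 d) then show ?case by (rule_tac x = "d / c" in exI) auto
qed

lemma in_ppoint: "z \<in> ppoint z"
  unfolding ppoint_def cscale_def by (rule CollectI, rule exI[of _ 1]) simp

lemma ppoint_eq_if_proportional:
  assumes "\<forall>i j. u i * w j = u j * w i" "\<exists>i. u i \<noteq> 0" "\<exists>j. w j \<noteq> 0"
  shows "ppoint u = ppoint w"
proof -
  obtain j where j: "w j \<noteq> 0" using assms(3) by blast
  have u: "u = cscale (u j / w j) w"
    using assms(1) j by (auto simp: cscale_def field_simps)
  then have "u j / w j \<noteq> 0" using assms(2) by (auto simp: cscale_def)
  then show ?thesis using u ppoint_cscale by metis
qed

subsection \<open>Irreducible varieties retracting onto a coordinate subspace\<close>

definition coord_trunc :: "nat \<Rightarrow> cvec \<Rightarrow> cvec" where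
  "coord_trunc k z = (\<lambda>i. if i \<le> k then z i else 0)"

text \<open>X is covered by the closed set z_0 = ... = z_k = 0 together with, for each of the finitely
  many points w of the slice, the closed set of points whose first k+1 coordinates are
  proportional to those of w (it contains every z whose truncation lies over w).\<close>
lemma irreducible_proportional_to_slice_point:
  assumes X: "proj_irreducible n X" and k: "k \<le> n"
    and trunc: "\<And>z. z \<in> X \<Longrightarrow> \<exists>i\<le>k. z i \<noteq> 0 \<Longrightarrow> coord_trunc k z \<in> X"
    and fin: "finite (ppoint ` (X \<inter> {z. \<forall>i>k. z i = 0}))"
  obtains w where "w \<in> X" "\<forall>i>k. w i = 0" "\<forall>z\<in>X. \<forall>i\<le>k. \<forall>j\<le>k. z i * w j = z j * w i"
  | "\<forall>z\<in>X. \<forall>i\<le>k. z i = 0"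
proof -
  define F where "F = X \<inter> {z. \<forall>i>k. z i = 0}"
  obtain W where W: "W \<subseteq> F" "finite W" "ppoint ` F = ppoint ` W"
    using finite_subset_image[OF fin[folded F_def] order_refl] by blast
  define P where "P w = {z\<in>X. \<forall>i\<le>k. \<forall>j\<le>k. z i * w j = z j * w i}" for w
  define Z where "Z = {z\<in>X. \<forall>i\<le>k. z i = 0}"
  have Xalg: "proj_alg n X" using X unfolding proj_irreducible_def by blast
  have "X \<subseteq> Z \<union> \<Union>(P ` W)"
  proof
    fix z assume z: "z \<in> X"
    show "z \<in> Z \<union> \<Union>(P ` W)"
    proof (cases "\<exists>i\<le>k. z i \<noteq> 0")
      case True
      then have "coord_trunc k z \<in> F" using trunc[OF z] by (simp add: F_def coord_trunc_def)
      then have "ppoint (coord_trunc k z) \<in> ppoint ` W" unfolding W(3)[symmetric] by (rule imageI)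
      then obtain w where w: "w \<in> W" "ppoint w = ppoint (coord_trunc k z)" by blast
      then obtain c where "w = cscale c (coord_trunc k z)"
        using in_ppoint[of w] unfolding ppoint_def by blast
      then have "z \<in> P w" using z by (simp add: P_def cscale_def coord_trunc_def mult_ac)
      then show ?thesis using w(1) by blast
    next
      case False
      with z show ?thesis by (simp add: Z_def)
    qed
  qed
  moreover have "Z \<union> \<Union>(P ` W) \<subseteq> X" unfolding P_def Z_def by blast
  ultimately have "X = \<Union>(insert Z (P ` W))" by (metis Union_insert subset_antisym)
  moreover have "proj_alg n Z" "proj_alg n (P w)" for w
    unfolding P_def Z_def using proj_alg_coords_zero[OF Xalg k] proj_alg_proportional[OF Xalg k] by auto
  ultimately have "X \<in> insert Z (P ` W)"
    by (intro proj_irreducible_finite_cover[OF X]) (use W(2) in auto)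
  then show ?thesis
  proof (elim insertE imageE)
    assume "X = Z"
    then show ?thesis using that(2) unfolding Z_def by blast
  next
    fix w assume w: "X = P w" "w \<in> W"
    then have "\<forall>z\<in>X. \<forall>i\<le>k. \<forall>j\<le>k. z i * w j = z j * w i" unfolding P_def by blast
    then show ?thesis using that(1) W(1) w(2) unfolding F_def by blast
  qed
qed

lemma card_ppoint_coord_slice_le_1:
  assumes X: "proj_irreducible n X" and k: "k \<le> n"
    and trunc: "\<And>z. z \<in> X \<Longrightarrow> \<exists>i\<le>k. z i \<noteq> 0 \<Longrightarrow> coord_trunc k z \<in> X"
    and fin: "finite (ppoint ` (X \<inter> {z. \<forall>i>k. z i = 0}))"
  shows "card (ppoint ` (X \<inter> {z. \<forall>i>k. z i = 0})) \<le> 1"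
proof -
  have Xalg: "proj_alg n X" using X unfolding proj_irreducible_def by blast
  have "ppoint u = ppoint v" if "u \<in> X" "\<forall>i>k. u i = 0" "v \<in> X" "\<forall>i>k. v i = 0" for u v
    using X k trunc fin
  proof (rule irreducible_proportional_to_slice_point)
    fix w assume w: "w \<in> X" "\<forall>i>k. w i = 0" "\<forall>z\<in>X. \<forall>i\<le>k. \<forall>j\<le>k. z i * w j = z j * w i"
    have "ppoint z = ppoint w" if "z \<in> X" "\<forall>i>k. z i = 0" for z
      using that w proj_alg_nonzero[OF Xalg]
      by (intro ppoint_eq_if_proportional) (metis mult_zero_left mult_zero_right not_le)
    then show ?thesis using that by metis
  next
    assume "\<forall>z\<in>X. \<forall>i\<le>k. z i = 0"
    then have "\<forall>i. u i = 0" using that by (metis not_le)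
    then show ?thesis using proj_alg_nonzero[OF Xalg \<open>u \<in> X\<close>] by simp
  qed
  then show ?thesis using fin by (auto simp: card_le_Suc0_iff_eq)
qed

subsection \<open>Limits of orbits\<close>

lemma peval_eq_sum_monom_val: "peval n p z = (\<Sum>m | p m \<noteq> 0. p m * monom_val n m z)"
  unfolding peval_def monom_val_def ..

lemma peval_cscale:
  assumes "homog n d p"
  shows "peval n p (cscale c z) = c ^ d * peval n p z"
proof -
  have "monom_val n m (cscale c z) = c ^ d * monom_val n m z" if "p m \<noteq> 0" for m
  proof -
    have "monom_val n m (cscale c z) = c ^ (\<Sum>i\<le>n. m i) * monom_val n m z"
      unfolding monom_val_def cscale_def by (simp add: power_mult_distrib prod.distrib power_sum)
    then show ?thesis using assms that unfolding homog_def by simp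
  qed
  then show ?thesis
    unfolding peval_eq_sum_monom_val sum_distrib_left by (intro sum.cong) (simp_all add: mult_ac)
qed

lemma proj_alg_cscale:
  assumes "proj_alg n X" "z \<in> X" "c \<noteq> 0"
  shows "cscale c z \<in> X"
proof -
  obtain S where S: "\<forall>p\<in>S. is_poly n p \<and> (\<exists>d. homog n d p)" "X = Vproj n S"
    using assms(1) unfolding proj_alg_def by blast
  have "peval n p (cscale c z) = 0" if "p \<in> S" for p
    using S assms(2) that by (auto simp: Vproj_def peval_cscale)
  then show ?thesis
    using S(2) assms(2,3) by (auto simp: Vproj_def in_coords_def cscale_def)
qed

lemma act_eq_cscale_act_diff:
  assumes "l \<noteq> 0"
  shows "act a l z = cscale (l powi b) (act (\<lambda>i. a i - b) l z)"
proof -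
  have "l powi a i = l powi b * l powi (a i - b)" for i
    using power_int_add[of l b "a i - b"] assms by simp
  then show ?thesis unfolding act_def cscale_def by (simp add: mult.assoc)
qed

lemma invariant_weight_shift:
  assumes "proj_alg n X" "invariant a X"
  shows "invariant (\<lambda>i. a i - b) X"
  unfolding invariant_def
proof safe
  fix z l assume "z \<in> X" "l \<noteq> (0::complex)"
  then have "cscale (l powi - b) (act a l z) \<in> X"
    using assms unfolding invariant_def by (intro proj_alg_cscale) auto
  then show "act (\<lambda>i. a i - b) l z \<in> X"
    using act_eq_cscale_act_diff[OF \<open>l \<noteq> 0\<close>, where a = "\<lambda>i. a i - b" and b = "- b"] by simp
qed

lemma isCont_peval_act:
  assumes "\<forall>i\<le>n. 0 \<le> a i"
  shows "isCont (\<lambda>l. peval n p (act a l z)) l0"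
proof -
  have "(\<lambda>l. peval n p (act a l z)) = (\<lambda>l. \<Sum>m | p m \<noteq> 0. p m * (\<Prod>i\<le>n. (l ^ nat (a i) * z i) ^ m i))"
    using assms by (auto simp: peval_def act_def power_int_nonneg_exp intro!: ext sum.cong prod.cong)
  then show ?thesis by (simp add: continuous_intros)
qed

text \<open>With nonnegative weights and 0 powi 0 = 1, act a 0 z is the limit of the orbit of z as
  \<lambda> \<rightarrow> 0, so closed conditions on the orbit pass to it.\<close>
lemma peval_act_zero:
  assumes "\<forall>i\<le>n. 0 \<le> a i" "\<forall>l. l \<noteq> 0 \<longrightarrow> peval n p (act a l z) = 0"
  shows "peval n p (act a 0 z) = 0"
proof -
  let ?g = "\<lambda>l. peval n p (act a l z)"
  have "(?g \<longlongrightarrow> ?g 0) (at 0)"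
    using isCont_peval_act[OF assms(1)] by (simp add: isCont_def)
  moreover have "(?g \<longlongrightarrow> 0) (at 0)"
    using assms(2) by (intro tendsto_eventually) (auto simp: eventually_at_filter)
  ultimately show ?thesis by (rule tendsto_unique[OF at_neq_bot])
qed

lemma act_zero_mem:
  assumes "proj_alg n X" "invariant a X" "\<forall>i\<le>n. 0 \<le> a i" "z \<in> X" "\<exists>i. act a 0 z i \<noteq> 0"
  shows "act a 0 z \<in> X"
proof -
  obtain S where S: "\<forall>p\<in>S. is_poly n p \<and> (\<exists>d. homog n d p)" "X = Vproj n S"
    using assms(1) unfolding proj_alg_def by blast
  have "peval n p (act a 0 z) = 0" if "p \<in> S" for p
    using assms(2-4) S(2) that
    by (intro peval_act_zero) (auto simp: invariant_def Vproj_def)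
  moreover have "in_coords n (act a 0 z)"
    using assms(4) S(2) by (auto simp: Vproj_def in_coords_def act_def)
  ultimately show ?thesis using S(2) assms(5) by (auto simp: Vproj_def)
qed

lemma ppoint_act_const_weight:
  assumes "\<forall>i. z i \<noteq> 0 \<longrightarrow> a i = b" "l \<noteq> 0"
  shows "ppoint (act a l z) = ppoint z"
proof -
  have "act a l z = cscale (l powi b) z"
    using assms(1) unfolding act_def cscale_def by (metis mult_zero_right)
  then show ?thesis using assms(2) by (simp add: ppoint_cscale)
qed

lemma coord_trunc_mem_if_min_weight:
  assumes X: "proj_alg n X" "invariant a X" and k: "k \<le> n"
    and weights: "\<forall>i\<le>n. b \<le> a i" "\<forall>i\<le>n. a i = b \<longleftrightarrow> i \<le> k"
    and z: "z \<in> X" "\<exists>i\<le>k. z i \<noteq> 0"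
  shows "coord_trunc k z \<in> X"
proof -
  have "in_coords n z" using X(1) z(1) unfolding proj_alg_def Vproj_def by blast
  have limit: "act (\<lambda>i. a i - b) 0 z = coord_trunc k z"
  proof
    fix i show "act (\<lambda>i. a i - b) 0 z i = coord_trunc k z i"
      using weights k \<open>in_coords n z\<close>
      by (cases "i \<le> n") (auto simp: act_def coord_trunc_def in_coords_def power_int_0_left_if)
  qed
  have "\<exists>i. coord_trunc k z i \<noteq> 0" using z(2) by (auto simp: coord_trunc_def)
  then have "act (\<lambda>i. a i - b) 0 z \<in> X"
    using weights(1) limit
    by (intro act_zero_mem[OF X(1) invariant_weight_shift[OF X] _ z(1)]) simp_all
  then show ?thesis using limit by simp
qed

lemma coord_slice_subset_fixed_pts:
  assumes "\<forall>i\<le>k. a i = b"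
  shows "X \<inter> {z. \<forall>i>k. z i = 0} \<subseteq> fixed_pts a X"
proof
  fix z assume z: "z \<in> X \<inter> {z. \<forall>i>k. z i = 0}"
  have weight: "a i = b" if "z i \<noteq> 0" for i
  proof -
    have "i \<le> k" using z that leI by auto
    then show ?thesis using assms by blast
  qed
  have "ppoint (act a l z) = ppoint z" if "l \<noteq> 0" for l
    using weight that by (intro ppoint_act_const_weight) auto
  then show "z \<in> fixed_pts a X" using z unfolding fixed_pts_def by blast
qed

theorem proposition4:
  fixes n k :: nat and a :: "nat \<Rightarrow> int" and X :: "cvec set"
  assumes mono: "\<forall>i j. i \<le> j \<and> j \<le> n \<longrightarrow> a i \<le> a j"
    and not_all_eq: "\<exists>i j. i \<le> n \<and> j \<le> n \<and> a i \<noteq> a j"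
    and X_var: "proj_irreducible n X"
    and X_conn: "proj_connected n X"
    and X_smooth: "proj_smooth n X"
    and X_inv: "invariant a X"
    and X_fix_fin: "finite (ppoint ` fixed_pts a X)"
    and k_lt: "k < n"
    and F1_eq: "\<forall>i\<le>k. a i = a 0"
    and F1_gap: "a 0 < a (Suc k)"
  shows "card (ppoint ` (X \<inter> {z. \<forall>i>k. z i = 0})) \<le> k + 1"
proof -
  have X_alg: "proj_alg n X" using X_var unfolding proj_irreducible_def by blast
  have min_weight: "a 0 \<le> a i" "a i = a 0 \<longleftrightarrow> i \<le> k" if "i \<le> n" for i
    using mono F1_eq F1_gap that by (metis le0 not_less_eq_eq order.strict_iff_not order_trans)+
  have "finite (ppoint ` (X \<inter> {z. \<forall>i>k. z i = 0}))"
    using coord_slice_subset_fixed_pts[OF F1_eq] X_fix_fin by (meson finite_subset image_mono)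
  then have "card (ppoint ` (X \<inter> {z. \<forall>i>k. z i = 0})) \<le> 1"
    using k_lt min_weight
    by (intro card_ppoint_coord_slice_le_1[OF X_var] coord_trunc_mem_if_min_weight[OF X_alg X_inv]) auto
  then show ?thesis by simp
qed

end
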